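(* Let $(\mathfrak J,B)$ be a $B$-irreducible pseudo-euclidean Jordan algebra. Then its operator of Casimir type $R_c$ is either nilpotent or invertible.
   Context: All algebras are finite-dimensional over a field of characteristic zero. A Jordan algebra is a commutative algebra with $x(yx^2)=(xy)x^2$; $(\mathfrak J,B)$ is pseudo-euclidean if $B$ is nondegenerate symmetric with $B(xy,z)=B(x,yz)$. $(\mathfrak J,B)$ is $B$-irreducible if it has no nontrivial ideal $\mathcal I$ with $B|_{\mathcal I\times\mathcal I}$ nondegenerate. With bases $\{e_i\},\{e'_i\}$ of $\mathfrak J$ satisfying $B(e_i,e'_j)=\delta_{ij}$ and $c=\sum_ie_ie'_i$, the operator of Casimir type is $R_c(x)=xc$ (independent of the choice of such bases). *)

theory Defs
  imports Complex_Main
begin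

text \<open>A finite-dimensional Jordan algebra over a field of characteristic zero is modelled as
  a vector space (smult :: 'k \<Rightarrow> 'v \<Rightarrow> 'v) with a bilinear product mult.\<close>

definition fin_dim_space :: "('k::field \<Rightarrow> 'v::ab_group_add \<Rightarrow> 'v) \<Rightarrow> bool" where
  "fin_dim_space smult \<longleftrightarrow> vector_space smult \<and> (\<exists>S. finite S \<and> Modules.module.span smult S = UNIV)"

definition bilinear_map :: "('k::field \<Rightarrow> 'v::ab_group_add \<Rightarrow> 'v) \<Rightarrow> ('v \<Rightarrow> 'v \<Rightarrow> 'v) \<Rightarrow> bool" where
  "bilinear_map smult m \<longleftrightarrow> (\<forall>x. Vector_Spaces.linear smult smult (m x))
                              \<and> (\<forall>y. Vector_Spaces.linear smult smult (\<lambda>x. m x y))"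

definition jordan_algebra :: "('k::field_char_0 \<Rightarrow> 'v::ab_group_add \<Rightarrow> 'v) \<Rightarrow> ('v \<Rightarrow> 'v \<Rightarrow> 'v) \<Rightarrow> bool" where
  "jordan_algebra smult m \<longleftrightarrow> fin_dim_space smult \<and> bilinear_map smult m
     \<and> (\<forall>x y. m x y = m y x)
     \<and> (\<forall>x y. m x (m y (m x x)) = m (m x y) (m x x))"

definition bilinear_form :: "('k::field \<Rightarrow> 'v::ab_group_add \<Rightarrow> 'v) \<Rightarrow> ('v \<Rightarrow> 'v \<Rightarrow> 'k) \<Rightarrow> bool" where
  "bilinear_form smult B \<longleftrightarrow> (\<forall>x. Vector_Spaces.linear smult (*) (B x))
                              \<and> (\<forall>y. Vector_Spaces.linear smult (*) (\<lambda>x. B x y))"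

definition pseudo_euclidean_jordan ::
  "('k::field_char_0 \<Rightarrow> 'v::ab_group_add \<Rightarrow> 'v) \<Rightarrow> ('v \<Rightarrow> 'v \<Rightarrow> 'v) \<Rightarrow> ('v \<Rightarrow> 'v \<Rightarrow> 'k) \<Rightarrow> bool" where
  "pseudo_euclidean_jordan smult m B \<longleftrightarrow> jordan_algebra smult m \<and> bilinear_form smult B
     \<and> (\<forall>x y. B x y = B y x)
     \<and> (\<forall>x. (\<forall>y. B x y = 0) \<longrightarrow> x = 0)
     \<and> (\<forall>x y z. B (m x y) z = B x (m y z))"

definition is_ideal :: "('k::field \<Rightarrow> 'v::ab_group_add \<Rightarrow> 'v) \<Rightarrow> ('v \<Rightarrow> 'v \<Rightarrow> 'v) \<Rightarrow> 'v set \<Rightarrow> bool" where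
  "is_ideal smult m I \<longleftrightarrow> Modules.module.subspace smult I \<and> (\<forall>x. \<forall>i\<in>I. m x i \<in> I)"

definition B_irreducible ::
  "('k::field_char_0 \<Rightarrow> 'v::ab_group_add \<Rightarrow> 'v) \<Rightarrow> ('v \<Rightarrow> 'v \<Rightarrow> 'v) \<Rightarrow> ('v \<Rightarrow> 'v \<Rightarrow> 'k) \<Rightarrow> bool" where
  "B_irreducible smult m B \<longleftrightarrow>
     \<not> (\<exists>I. is_ideal smult m I \<and> I \<noteq> {0} \<and> I \<noteq> UNIV
            \<and> (\<forall>x\<in>I. (\<forall>y\<in>I. B x y = 0) \<longrightarrow> x = 0))"

definition dual_bases ::
  "('k::field \<Rightarrow> 'v::ab_group_add \<Rightarrow> 'v) \<Rightarrow> ('v \<Rightarrow> 'v \<Rightarrow> 'k) \<Rightarrow> nat \<Rightarrow> (nat \<Rightarrow> 'v) \<Rightarrow> (nat \<Rightarrow> 'v) \<Rightarrow> bool" where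
  "dual_bases smult B n e e' \<longleftrightarrow>
     inj_on e {..<n} \<and> \<not> Modules.module.dependent smult (e ` {..<n}) \<and> Modules.module.span smult (e ` {..<n}) = UNIV
   \<and> inj_on e' {..<n} \<and> \<not> Modules.module.dependent smult (e' ` {..<n}) \<and> Modules.module.span smult (e' ` {..<n}) = UNIV
   \<and> (\<forall>i<n. \<forall>j<n. B (e i) (e' j) = (if i = j then 1 else 0))"

definition casimir_element :: "('v::ab_group_add \<Rightarrow> 'v \<Rightarrow> 'v) \<Rightarrow> nat \<Rightarrow> (nat \<Rightarrow> 'v) \<Rightarrow> (nat \<Rightarrow> 'v) \<Rightarrow> 'v" where
  "casimir_element m n e e' = (\<Sum>i<n. m (e i) (e' i))"

definition casimir_operator :: "('v::ab_group_add \<Rightarrow> 'v \<Rightarrow> 'v) \<Rightarrow> nat \<Rightarrow> (nat \<Rightarrow> 'v) \<Rightarrow> (nat \<Rightarrow> 'v) \<Rightarrow> 'v \<Rightarrow> 'v" where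
  "casimir_operator m n e e' = (\<lambda>x. m x (casimir_element m n e e'))"

definition nilpotent_op :: "('v::zero \<Rightarrow> 'v) \<Rightarrow> bool" where
  "nilpotent_op f \<longleftrightarrow> (\<exists>k. (f ^^ k) = (\<lambda>_. 0))"

end

theory Submission
  imports Defs
begin

text \<open>
  Write \<open>R x\<close> for multiplication by \<open>x\<close> and \<open>tr\<close> for the trace. Polarizing the Jordan
  identity shows \<open>tr R((zx)y) = tr R((zy)x)\<close>; since \<open>B(cx, y) = tr R(xy)\<close> by invariance,
  this says that \<open>R c\<close> commutes with every \<open>R z\<close>, and \<open>R c\<close> is also \<open>B\<close>-self-adjoint.
  By Fitting's lemma the space is \<open>ker (R c)\<^sup>M \<oplus> im (R c)\<^sup>M\<close> for some \<open>M > 0\<close>. The kernel is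
  an ideal and is \<open>B\<close>-orthogonal to the image, so \<open>B\<close> is nondegenerate on it;
  \<open>B\<close>-irreducibility then makes it \<open>0\<close> (\<open>R c\<close> invertible) or everything (\<open>R c\<close> nilpotent).
\<close>

lemma cubic_polarization:
  fixes T :: "'a::ab_group_add \<Rightarrow> 'a \<Rightarrow> 'a \<Rightarrow> 'b::ab_group_add"
  assumes add1: "\<And>a b u v. T (a + b) u v = T a u v + T b u v"
    and add2: "\<And>a b u v. T u (a + b) v = T u a v + T u b v"
    and add3: "\<And>a b u v. T u v (a + b) = T u v a + T u v b"
    and cube: "\<And>x. T x x x = 0"
    and torsion_free: "\<And>z::'b. z + z = 0 \<Longrightarrow> z = 0"
  shows "T a b c + T a c b + T b a c + T b c a + T c a b + T c b a = 0"
proof -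
  have neg1: "T (- a) u v = - T a u v" for a u v
    using additive.minus[of "\<lambda>a. T a u v"] add1 by (simp add: additive_def)
  have neg2: "T u (- a) v = - T u a v" for a u v
    using additive.minus[of "\<lambda>a. T u a v"] add2 by (simp add: additive_def)
  have neg3: "T u v (- a) = - T u v a" for a u v
    using additive.minus[of "\<lambda>a. T u v a"] add3 by (simp add: additive_def)
  define C where "C x w = T w x x + T x w x + T x x w" for x w
  have C0: "C x w = 0" for x w
  proof (rule torsion_free)
    have "T (x + w) (x + w) (x + w) - T (x - w) (x - w) (x - w) = C x w + C x w + T w w w + T w w w"
      unfolding C_def
      apply (simp only: add1 add2 add3 diff_conv_add_uminus)
      apply (simp only: neg1 neg2 neg3 minus_minus minus_add_distrib)
      by (simp add: algebra_simps)
    then show "C x w + C x w = 0" by (simp add: cube)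
  qed
  have "(T a b c + T a c b + T b a c + T b c a + T c a b + T c b a)
      + (T a b c + T a c b + T b a c + T b c a + T c a b + T c b a) = C (b + c) a - C (b - c) a"
    unfolding C_def
    apply (simp only: add1 add2 add3 diff_conv_add_uminus)
    apply (simp only: neg1 neg2 neg3 minus_minus minus_add_distrib)
    by (simp add: algebra_simps)
  also have "\<dots> = 0" by (simp only: C0 diff_self)
  finally show ?thesis by (rule torsion_free)
qed

locale jordan_product = vector_space smult
  for smult :: "'k::field_char_0 \<Rightarrow> 'v::ab_group_add \<Rightarrow> 'v" +
  fixes m :: "'v \<Rightarrow> 'v \<Rightarrow> 'v"
  assumes mult_linear: "Vector_Spaces.linear smult smult (m x)"
    and mult_commute: "m x y = m y x"
    and jordan_identity: "m x (m y (m x x)) = m (m x y) (m x x)"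
begin

lemma add_self_eq_0D:
  fixes v :: 'v
  assumes "v + v = 0"
  shows "v = 0"
proof -
  from assms have "smult (1/2) (v + v) = 0" by simp
  then show ?thesis by (simp add: scale_right_distrib flip: scale_left_distrib)
qed

lemma mult_add_right: "m x (a + b) = m x a + m x b"
  by (rule module_hom.add[OF module_hom_linearI[OF mult_linear]])

lemma mult_add_left: "m (a + b) x = m a x + m b x"
  by (simp only: mult_commute[of _ x] mult_add_right)

lemma mult_0_right: "m x 0 = 0"
  by (rule module_hom.zero[OF module_hom_linearI[OF mult_linear]])

lemma linearized_jordan_identity:
  "m (m (m a b) y) w = m (m y a) (m b w) + m (m y b) (m a w) + m (m a b) (m y w)
     - m a (m y (m b w)) - m b (m y (m a w))"
proof -
  define T where "T u1 u2 u3 = m u1 (m y (m u2 u3)) - m (m u1 y) (m u2 u3)" for u1 u2 u3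
  have T_swap: "T u v z = T u z v" for u v z
    by (simp add: T_def mult_commute[of v z])
  have "0 = T w a b + T w b a + T a w b + T a b w + T b w a + T b a w"
    by (rule cubic_polarization[OF _ _ _ _ add_self_eq_0D, symmetric])
      (simp_all add: T_def jordan_identity mult_add_left mult_add_right)
  also have "\<dots> = (T w a b + T a w b + T b a w) + (T w a b + T a w b + T b a w)"
    by (simp only: T_swap[of w b a] T_swap[of a b w] T_swap[of b w a] add_ac)
  finally have "T w a b + T a w b + T b a w = 0"
    by (rule add_self_eq_0D[OF sym])
  moreover have commuted:
    "m (m (m a b) y) w = m w (m y (m a b))" "m (m y a) (m b w) = m (m a y) (m w b)"
    "m (m y b) (m a w) = m (m b y) (m a w)" "m (m a b) (m y w) = m (m w y) (m a b)"
    "m a (m y (m b w)) = m a (m y (m w b))"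
    by (simp_all only: mult_commute[of "m y (m a b)" w] mult_commute[of "m a b" y]
        mult_commute[of y a] mult_commute[of b w] mult_commute[of y b]
        mult_commute[of "m a b" "m w y"] mult_commute[of y w])
  ultimately show ?thesis
    unfolding commuted by (simp add: T_def algebra_simps)
qed

end

lemma funpow_commute:
  assumes "\<And>x. f (g x) = g (f x)"
  shows "(f ^^ k) (g x) = g ((f ^^ k) x)"
  by (induction k) (simp_all add: assms)

lemma (in vector_space) linear_compose_apply:
  "Vector_Spaces.linear scale scale f \<Longrightarrow> Vector_Spaces.linear scale scale g
    \<Longrightarrow> Vector_Spaces.linear scale scale (\<lambda>x. f (g x))"
  using Vector_Spaces.linear_compose[of scale scale g scale f] by (simp add: comp_def)

lemma (in vector_space) linear_funpow:
  assumes "Vector_Spaces.linear scale scale f"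
  shows "Vector_Spaces.linear scale scale (f ^^ k)"
  by (induction k) (simp_all add: linear_ident linear_compose_apply[OF assms])

text \<open>Fitting's lemma: some power \<open>f\<^sup>M\<close> maps its image onto itself, i.e. the space is the
  direct sum of the kernel and the image of \<open>f\<^sup>M\<close>.\<close>

lemma (in finite_dimensional_vector_space) fitting_decomposition:
  assumes f: "Vector_Spaces.linear scale scale f"
  obtains M where "0 < M" and "\<And>x. \<exists>y. (f ^^ M) x = (f ^^ M) ((f ^^ M) y)"
proof -
  define R where "R k = range (f ^^ k)" for k
  have R_subspace: "subspace (R k)" for k
    unfolding R_def
    by (rule module_hom.subspace_image[OF module_hom_linearI[OF linear_funpow[OF f]] subspace_UNIV])
  have R_antimono: "R j \<subseteq> R i" if "i \<le> j" for i j
  proof -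
    have "f ^^ j = f ^^ i \<circ> f ^^ (j - i)"
      using that by (simp flip: funpow_add)
    then show ?thesis by (auto simp: R_def)
  qed
  obtain N where N: "\<And>k. dim (R N) \<le> dim (R k)"
    using ex_has_least_nat[of "\<lambda>_. True" 0 "\<lambda>k. dim (R k)"] by auto
  define M where "M = Suc N"
  have "dim (R M) \<le> dim (R (M + M))"
    using dim_subset[OF R_antimono, of N M] N[of "M + M"] by (simp add: M_def)
  then have "R (M + M) = R M"
    by (intro subspace_dim_equal R_subspace R_antimono) simp_all
  then have "(f ^^ M) x \<in> range ((f ^^ M) \<circ> (f ^^ M))" for x
    by (auto simp: R_def simp flip: funpow_add)
  then have "\<exists>y. (f ^^ M) x = (f ^^ M) ((f ^^ M) y)" for x
    by auto
  moreover have "0 < M" by (simp add: M_def)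
  ultimately show thesis using that by blast
qed

locale pseudo_euclidean_jordan_algebra =
  jordan_product smult m + finite_dimensional_vector_space smult basis
  for smult :: "'k::field_char_0 \<Rightarrow> 'v::ab_group_add \<Rightarrow> 'v" and m basis +
  fixes B :: "'v \<Rightarrow> 'v \<Rightarrow> 'k"
  assumes form_linear: "Vector_Spaces.linear smult (*) (B x)"
    and form_commute: "B x y = B y x"
    and form_nondegenerate: "(\<And>y. B x y = 0) \<Longrightarrow> x = 0"
    and form_invariant: "B (m x y) z = B x (m y z)"
begin

lemma form_add_right: "B x (a + b) = B x a + B x b"
  by (rule module_hom.add[OF module_hom_linearI[OF form_linear]])

lemma form_diff_right: "B x (a - b) = B x a - B x b"
  by (rule module_hom.diff[OF module_hom_linearI[OF form_linear]])

lemma form_diff_left: "B (a - b) x = B a x - B b x"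
  by (simp only: form_commute[of _ x] form_diff_right)

lemma form_0_left: "B 0 x = 0"
  by (simp only: form_commute[of 0] module_hom.zero[OF module_hom_linearI[OF form_linear]])

lemma form_scale_right: "B x (smult c a) = c * B x a"
  using module_hom.scale[OF module_hom_linearI[OF form_linear]] by simp

lemma form_sum_right: "B x (sum g S) = (\<Sum>a\<in>S. B x (g a))"
  by (rule module_hom.sum[OF module_hom_linearI[OF form_linear]])

lemma form_sum_left: "B (sum g S) x = (\<Sum>a\<in>S. B (g a) x)"
  by (simp only: form_commute[of _ x] form_sum_right)

lemma form_eqI: "(\<And>y. B u y = B v y) \<Longrightarrow> u = v"
  using form_nondegenerate[of "u - v"] by (simp add: form_diff_left)

lemma kernel_is_ideal:
  assumes "Vector_Spaces.linear smult smult D" and "\<And>z x. D (m z x) = m z (D x)"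
  shows "is_ideal smult m {x. D x = 0}"
  unfolding is_ideal_def
  using module_hom.subspace_kernel[OF module_hom_linearI[OF assms(1)]]
  by (simp add: assms(2) mult_0_right)

lemma fitting_kernel_nondegenerate:
  assumes self_adjoint: "\<And>x y. B (P x) y = B x (P y)"
    and decomposition: "\<And>x. \<exists>y. P x = P (P y)"
    and "Vector_Spaces.linear smult smult P"
    and u: "P u = 0" "\<And>y. P y = 0 \<Longrightarrow> B u y = 0"
  shows "u = 0"
proof (rule form_nondegenerate)
  fix x
  obtain y where "P x = P (P y)" using decomposition by blast
  then have "P (x - P y) = 0"
    by (simp add: module_hom.diff[OF module_hom_linearI[OF assms(3)]])
  then have "B u (x - P y) = 0"
    by (rule u(2))
  then have "B u x = B u (P y)"
    by (simp add: form_diff_right)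
  also have "\<dots> = 0"
    by (simp add: u(1) form_0_left flip: self_adjoint)
  finally show "B u x = 0" .
qed

lemma nilpotent_or_bij_if_commuting_self_adjoint:
  assumes irreducible: "B_irreducible smult m B"
    and D: "Vector_Spaces.linear smult smult D"
    and commute: "\<And>z x. D (m z x) = m z (D x)"
    and self_adjoint: "\<And>x y. B (D x) y = B x (D y)"
  shows "nilpotent_op D \<or> bij D"
proof -
  obtain M where "0 < M" and decomposition: "\<And>x. \<exists>y. (D ^^ M) x = (D ^^ M) ((D ^^ M) y)"
    using fitting_decomposition[OF D] by blast
  have P: "Vector_Spaces.linear smult smult (D ^^ M)"
    by (rule linear_funpow[OF D])
  have "(D ^^ M) (m z x) = m z ((D ^^ M) x)" for z x
    by (rule funpow_commute) (rule commute)
  then have "is_ideal smult m {x. (D ^^ M) x = 0}"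
    by (rule kernel_is_ideal[OF P])
  moreover have "B ((D ^^ M) x) y = B x ((D ^^ M) y)" for x y
    by (induction M arbitrary: x) (simp_all add: self_adjoint funpow_swap1)
  then have "\<forall>u \<in> {x. (D ^^ M) x = 0}. (\<forall>y \<in> {x. (D ^^ M) x = 0}. B u y = 0) \<longrightarrow> u = 0"
    using fitting_kernel_nondegenerate[OF _ decomposition P] by blast
  ultimately have "{x. (D ^^ M) x = 0} = {0} \<or> {x. (D ^^ M) x = 0} = UNIV"
    using irreducible unfolding B_irreducible_def by blast
  then show ?thesis
  proof
    assume "{x. (D ^^ M) x = 0} = UNIV"
    then have "D ^^ M = (\<lambda>_. 0)" by auto
    then show ?thesis unfolding nilpotent_op_def by blast
  next
    assume kernel_trivial: "{x. (D ^^ M) x = 0} = {0}"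
    have "x = 0" if "D x = 0" for x
    proof -
      have "(D ^^ M) x = (D ^^ (M - 1)) (D x)"
        using \<open>0 < M\<close> funpow_Suc_right[of "M - 1" D] by simp
      also have "\<dots> = 0"
        using that module_hom.zero[OF module_hom_linearI[OF linear_funpow[OF D]]] by simp
      finally show ?thesis
        using kernel_trivial by blast
    qed
    then have "inj D"
      using module_hom.inj_iff_eq_0[OF module_hom_linearI[OF D]] by blast
    then show ?thesis
      using linear_inj_imp_surj[OF D] by (simp add: bij_def)
  qed
qed

end

locale pseudo_euclidean_jordan_dual_bases = pseudo_euclidean_jordan_algebra smult m basis B
  for smult :: "'k::field_char_0 \<Rightarrow> 'v::ab_group_add \<Rightarrow> 'v" and m basis B +
  fixes n :: nat and e e' :: "nat \<Rightarrow> 'v"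
  assumes dual_span: "span (e ` {..<n}) = UNIV"
    and dual: "\<And>i j. i < n \<Longrightarrow> j < n \<Longrightarrow> B (e i) (e' j) = (if i = j then 1 else 0)"
begin

lemma dual_expansion: "v = (\<Sum>j<n. smult (B (e j) v) (e' j))"
proof -
  let ?w = "\<Sum>j<n. smult (B (e j) v) (e' j)"
  have "B (v - ?w) (e i) = 0" if "i < n" for i
  proof -
    have "(\<Sum>j<n. B (e j) v * B (e i) (e' j)) = (\<Sum>j<n. if j = i then B (e j) v else 0)"
      by (intro sum.cong) (simp_all add: dual that)
    then show ?thesis
      using that by (simp add: form_commute[of _ "e i"] form_diff_right form_sum_right form_scale_right)
  qed
  then have "span (e ` {..<n}) \<subseteq> {y. B (v - ?w) y = 0}"
    by (intro span_minimal module_hom.subspace_kernel[OF module_hom_linearI[OF form_linear]]) blast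
  then have "v - ?w = 0"
    using dual_span by (intro form_nondegenerate) blast
  then show ?thesis by simp
qed

text \<open>For dual bases this is the ordinary trace of a linear map \<open>f\<close>.\<close>

definition trace :: "('v \<Rightarrow> 'v) \<Rightarrow> 'k" where
  "trace f = (\<Sum>i<n. B (e i) (f (e' i)))"

lemma trace_comp:
  assumes "Vector_Spaces.linear smult smult f"
  shows "trace (\<lambda>w. f (g w)) = (\<Sum>i<n. \<Sum>j<n. B (e j) (g (e' i)) * B (e i) (f (e' j)))"
proof -
  have "B (e i) (f (g (e' i))) = (\<Sum>j<n. B (e j) (g (e' i)) * B (e i) (f (e' j)))" for i
  proof -
    have "f (g (e' i)) = f (\<Sum>j<n. smult (B (e j) (g (e' i))) (e' j))"
      by (subst dual_expansion) (rule refl)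
    also have "\<dots> = (\<Sum>j<n. smult (B (e j) (g (e' i))) (f (e' j)))"
      by (simp add: module_hom.sum[OF module_hom_linearI[OF assms]]
          module_hom.scale[OF module_hom_linearI[OF assms]])
    finally show ?thesis by (simp add: form_sum_right form_scale_right)
  qed
  then show ?thesis by (simp add: trace_def)
qed

lemma trace_comp_commute:
  assumes "Vector_Spaces.linear smult smult f" and "Vector_Spaces.linear smult smult g"
  shows "trace (\<lambda>w. f (g w)) = trace (\<lambda>w. g (f w))"
  unfolding trace_comp[OF assms(1)] trace_comp[OF assms(2)]
  by (subst sum.swap) (simp add: mult.commute)

lemma trace_add: "trace (\<lambda>w. f w + g w) = trace f + trace g"
  by (simp add: trace_def form_add_right sum.distrib)

lemma trace_diff: "trace (\<lambda>w. f w - g w) = trace f - trace g"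
  by (simp add: trace_def form_diff_right sum_subtractf)

lemma trace_mult_mult_swap: "trace (m (m (m z x) y)) = trace (m (m (m z y) x))"
proof -
  have linearized: "trace (m (m (m a b) y)) = trace (\<lambda>w. m (m y a) (m b w))
      + trace (\<lambda>w. m (m y b) (m a w)) + trace (\<lambda>w. m (m a b) (m y w))
      - trace (\<lambda>w. m a (m y (m b w))) - trace (\<lambda>w. m b (m y (m a w)))" for a b y
    by (subst linearized_jordan_identity[abs_def]) (simp only: trace_add trace_diff)
  have "trace (\<lambda>w. m z (m y (m x w))) = trace (\<lambda>w. m y (m x (m z w)))"
    by (rule trace_comp_commute) (simp_all add: mult_linear linear_compose_apply)
  moreover have "trace (\<lambda>w. m x (m y (m z w))) = trace (\<lambda>w. m z (m x (m y w)))"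
    by (rule trace_comp_commute) (simp_all add: mult_linear linear_compose_apply)
  ultimately show ?thesis
    unfolding linearized
    by (simp only: mult_commute[of y z] mult_commute[of y x] mult_commute[of z x])
      (simp add: algebra_simps)
qed

lemma form_casimir: "B (m (casimir_element m n e e') x) y = trace (m (m x y))"
proof -
  have "B (m (casimir_element m n e e') x) y = B (casimir_element m n e e') (m x y)"
    by (rule form_invariant)
  also have "\<dots> = (\<Sum>i<n. B (e i) (m (e' i) (m x y)))"
    by (simp add: casimir_element_def form_sum_left form_invariant)
  also have "\<dots> = trace (m (m x y))"
    unfolding trace_def by (simp only: mult_commute[of "e' _" "m x y"])
  finally show ?thesis .
qed

lemma casimir_mult_commute:
  "m (casimir_element m n e e') (m z x) = m z (m (casimir_element m n e e') x)"
proof (rule form_eqI)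
  fix y
  let ?c = "casimir_element m n e e'"
  have "B (m ?c (m z x)) y = trace (m (m (m z x) y))" by (rule form_casimir)
  also have "\<dots> = trace (m (m (m z y) x))" by (rule trace_mult_mult_swap)
  also have "\<dots> = trace (m (m x (m z y)))" by (simp only: mult_commute[of "m z y" x])
  also have "\<dots> = B (m ?c x) (m z y)" by (rule form_casimir[symmetric])
  also have "\<dots> = B (m z (m ?c x)) y" by (simp only: form_invariant[symmetric] mult_commute[of _ z])
  finally show "B (m ?c (m z x)) y = B (m z (m ?c x)) y" .
qed

lemma casimir_self_adjoint:
  "B (m (casimir_element m n e e') x) y = B x (m (casimir_element m n e e') y)"
  by (simp only: mult_commute[of _ x] form_invariant)

end

lemma pseudo_euclidean_jordan_dual_bases_if_dual_bases:
  assumes "pseudo_euclidean_jordan smult m B" and "dual_bases smult B n e e'"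
  shows "pseudo_euclidean_jordan_dual_bases smult m (e ` {..<n}) B n e e'"
proof -
  from assms(1) have jordan: "jordan_algebra smult m" and form: "bilinear_form smult B"
    and form_commute: "\<And>x y. B x y = B y x" and nondegenerate: "\<And>x. (\<forall>y. B x y = 0) \<Longrightarrow> x = 0"
    and invariant: "\<And>x y z. B (m x y) z = B x (m y z)"
    unfolding pseudo_euclidean_jordan_def by blast+
  from jordan have "vector_space smult"
    unfolding jordan_algebra_def fin_dim_space_def by blast
  then show ?thesis
  proof intro_locales
    show "jordan_product_axioms smult m"
      using jordan unfolding jordan_product_axioms_def jordan_algebra_def bilinear_map_def by blast
    show "finite_dimensional_vector_space_axioms smult (e ` {..<n})"
      using assms(2) unfolding finite_dimensional_vector_space_axioms_def dual_bases_def by blast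
    show "pseudo_euclidean_jordan_algebra_axioms smult m B"
      using form form_commute nondegenerate invariant
      unfolding pseudo_euclidean_jordan_algebra_axioms_def bilinear_form_def by blast
    show "pseudo_euclidean_jordan_dual_bases_axioms smult B n e e'"
      using assms(2) unfolding pseudo_euclidean_jordan_dual_bases_axioms_def dual_bases_def by blast
  qed
qed

theorem mainTheorem15:
  fixes smult :: "'k::field_char_0 \<Rightarrow> 'v::ab_group_add \<Rightarrow> 'v"
    and m :: "'v \<Rightarrow> 'v \<Rightarrow> 'v"
    and B :: "'v \<Rightarrow> 'v \<Rightarrow> 'k"
    and n :: nat and e e' :: "nat \<Rightarrow> 'v"
  assumes "pseudo_euclidean_jordan smult m B"
    and "B_irreducible smult m B"
    and "dual_bases smult B n e e'"
  shows "nilpotent_op (casimir_operator m n e e') \<or> bij (casimir_operator m n e e')"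
proof -
  interpret pseudo_euclidean_jordan_dual_bases smult m "e ` {..<n}" B n e e'
    using pseudo_euclidean_jordan_dual_bases_if_dual_bases[OF assms(1,3)] .
  have "casimir_operator m n e e' = m (casimir_element m n e e')"
    by (auto simp: casimir_operator_def mult_commute)
  then show ?thesis
    using nilpotent_or_bij_if_commuting_self_adjoint[OF assms(2)]
      mult_linear casimir_mult_commute casimir_self_adjoint by simp
qed

end
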